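(* Let $\bm{N}=(N_0,\ldots,N_{n-1},-\sum_iN_i)$ with each $N_i\in\mathbb{Z}_{\ge0}$. A weak composition $\bm{j}=(j_0,\ldots,j_{n-1})$ of $\binom n2$ belongs to $\mathcal{S}^+_n(\bm{N})$ if and only if $j_i\le N_i+n-i-1$ for $i=0,\ldots,n-1$ and $\sum_{i=0}^k j_i\ge\sum_{i=0}^k(n-1-i)$ for all $k=0,\ldots,n-1$.
   Context: For $\bm{M}=(M_0,\ldots,M_n)\in\mathbb{Z}^{n+1}$ with $\sum_iM_i=0$, $K_n(\bm{M})$ is the number of integer vectors $(f_{ij})_{0\le i<j\le n}\in\mathbb{Z}_{\ge0}^{\binom{n+1}{2}}$ with $\sum_{j>i} f_{ij}-\sum_{k<i} f_{ki}=M_i$ for all $i$. Let $\bm\delta=(n-1,n-2,\ldots,1,0)$. For a weak composition $\bm{j}$ of $\binom n2$ (nonnegative integers summing to $\binom n2$), $K_n(\bm{j}-\bm\delta)$ means $K_n(j_0-(n-1),j_1-(n-2),\ldots,j_{n-1}-0,0)$. $\mathcal{S}^+_n(\bm{N})$ is the set of weak compositions $\bm{j}$ of $\binom n2$ such that $\binom{N_0+n-1}{j_0}\binom{N_1+n-2}{j_1}\cdots\binom{N_{n-1}}{j_{n-1}}\cdot K_n(\bm{j}-\bm\delta)>0$. *)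

theory Defs
  imports Main
begin

(* Vectors M = (M_0,...,M_n) are functions nat => int, only indices 0..n matter.
   A flow f = (f_ij)_{0<=i<j<=n} is a function nat => nat => nat which vanishes
   outside {(i,j). i < j <= n}. *)
definition flows :: "nat \<Rightarrow> (nat \<Rightarrow> int) \<Rightarrow> (nat \<Rightarrow> nat \<Rightarrow> nat) set" where
  "flows n M = {f. (\<forall>i j. \<not> (i < j \<and> j \<le> n) \<longrightarrow> f i j = 0) \<and>
      (\<forall>i\<le>n. (\<Sum>j\<in>{i<..n}. int (f i j)) - (\<Sum>k<i. int (f k i)) = M i)}"

definition kostant :: "nat \<Rightarrow> (nat \<Rightarrow> int) \<Rightarrow> nat" where
  "kostant n M = card (flows n M)"

definition weak_comps :: "nat \<Rightarrow> (nat \<Rightarrow> nat) set" where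
  "weak_comps n = {j. (\<forall>i\<ge>n. j i = 0) \<and> (\<Sum>i<n. j i) = n choose 2}"

definition j_minus_delta :: "nat \<Rightarrow> (nat \<Rightarrow> nat) \<Rightarrow> nat \<Rightarrow> int" where
  "j_minus_delta n j = (\<lambda>i. if i < n then int (j i) - int (n - 1 - i) else 0)"

(* S^+_n(N) for N = (N_0,...,N_{n-1}, -sum N_i) with N_i >= 0 (N given by its first n entries) *)
definition Splus :: "nat \<Rightarrow> (nat \<Rightarrow> nat) \<Rightarrow> (nat \<Rightarrow> nat) set" where
  "Splus n N = {j \<in> weak_comps n.
      (\<Prod>i<n. (N i + n - 1 - i) choose (j i)) * kostant n (j_minus_delta n j) > 0}"

end

theory Submission
  imports Defs
begin

(* The flow leaving the initial segment {0..k} of a flow f in flows n M crosses the cut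
   to {k+1..n} along nonnegative edges, so it equals the partial sum M_0 + ... + M_k.
   Hence K_n(M) > 0 forces all these partial sums to be nonnegative (and the total to
   vanish); conversely, if they are, the path flow carrying M_0 + ... + M_i along the
   edge (i, i+1) is a flow.  Applied to M = j - delta this is the dominance condition,
   and the binomial product is positive iff each j_i is at most its upper entry. *)

lemma flows_outflow_of_initial_segment:
  assumes f: "f \<in> flows n M" and k: "k \<le> n"
  shows "(\<Sum>i\<le>k. M i) = (\<Sum>i\<le>k. \<Sum>l\<in>{k<..n}. int (f i l))"
  using k
proof (induction k)
  case 0
  then show ?case using f unfolding flows_def by auto
next
  case (Suc k)
  have M_Suc: "M (Suc k) = (\<Sum>l\<in>{Suc k<..n}. int (f (Suc k) l)) - (\<Sum>i\<le>k. int (f i (Suc k)))"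
    using f Suc.prems unfolding flows_def by (auto simp: lessThan_Suc_atMost)
  have split_cut: "(\<Sum>l\<in>{k<..n}. int (f i l)) = int (f i (Suc k)) + (\<Sum>l\<in>{Suc k<..n}. int (f i l))"
    for i
  proof -
    have "{k<..n} = insert (Suc k) {Suc k<..n}" using Suc.prems by auto
    then show ?thesis by simp
  qed
  have "(\<Sum>i\<le>Suc k. M i) = (\<Sum>i\<le>k. \<Sum>l\<in>{k<..n}. int (f i l)) + M (Suc k)"
    using Suc by simp
  also have "\<dots> = (\<Sum>i\<le>k. \<Sum>l\<in>{Suc k<..n}. int (f i l)) + (\<Sum>l\<in>{Suc k<..n}. int (f (Suc k) l))"
    by (simp add: split_cut sum.distrib M_Suc)
  also have "\<dots> = (\<Sum>i\<le>Suc k. \<Sum>l\<in>{Suc k<..n}. int (f i l))"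
    by simp
  finally show ?case .
qed

lemma finite_flows: "finite (flows n M)"
proof -
  define B where "B = (\<Sum>i\<le>n. nat (\<Sum>i'\<le>i. M i'))"
  have bounded: "f i l \<le> B" if f: "f \<in> flows n M" for f i l
  proof (cases "i < l \<and> l \<le> n")
    case True
    have "int (f i l) \<le> (\<Sum>l'\<in>{i<..n}. int (f i l'))"
      by (rule member_le_sum) (use True in auto)
    also have "\<dots> \<le> (\<Sum>i'\<le>i. \<Sum>l'\<in>{i<..n}. int (f i' l'))"
      by (rule member_le_sum[where f="\<lambda>i'. \<Sum>l'\<in>{i<..n}. int (f i' l')"])
        (auto intro: sum_nonneg)
    also have "\<dots> = (\<Sum>i'\<le>i. M i')"
      using flows_outflow_of_initial_segment[OF f, of i] True by simp
    finally have "f i l \<le> nat (\<Sum>i'\<le>i. M i')" by linarith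
    also have "\<dots> \<le> B" unfolding B_def
      by (rule member_le_sum[where f="\<lambda>i. nat (\<Sum>i'\<le>i. M i')"]) (use True in auto)
    finally show ?thesis .
  next
    case False
    then show ?thesis using f unfolding flows_def by auto
  qed
  define Rows where "Rows = {g :: nat \<Rightarrow> nat. \<forall>x. (x \<in> {..n} \<longrightarrow> g x \<in> {..B}) \<and> (x \<notin> {..n} \<longrightarrow> g x = 0)}"
  define Mats where "Mats = {f. \<forall>x. (x \<in> {..n} \<longrightarrow> f x \<in> Rows) \<and> (x \<notin> {..n} \<longrightarrow> f x = (\<lambda>_. 0))}"
  have "finite Rows" unfolding Rows_def by (rule finite_set_of_finite_funs) auto
  then have "finite Mats" unfolding Mats_def by (intro finite_set_of_finite_funs) auto
  moreover have "f \<in> Mats" if f: "f \<in> flows n M" for f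
  proof -
    have "f i l = 0" if "\<not> (i < l \<and> l \<le> n)" for i l
      using f that unfolding flows_def by blast
    then show ?thesis using bounded[OF f] unfolding Mats_def Rows_def by auto
  qed
  ultimately show ?thesis by (meson finite_subset subsetI)
qed

definition path_flow :: "nat \<Rightarrow> (nat \<Rightarrow> int) \<Rightarrow> nat \<Rightarrow> nat \<Rightarrow> nat" where
  "path_flow n M i l = (if l = Suc i \<and> l \<le> n then nat (\<Sum>i'\<le>i. M i') else 0)"

lemma path_flow_in_flows:
  assumes nonneg: "\<forall>k<n. (\<Sum>i\<le>k. M i) \<ge> 0" and total: "(\<Sum>i\<le>n. M i) = 0"
  shows "path_flow n M \<in> flows n M"
proof -
  let ?f = "path_flow n M" and ?S = "\<lambda>i. \<Sum>i'\<le>i. M i'"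
  have outflow: "(\<Sum>l\<in>{i<..n}. int (?f i l)) = (if i < n then ?S i else 0)" for i
  proof -
    have "(\<Sum>l\<in>{i<..n}. int (?f i l)) = (\<Sum>l\<in>{i<..n}. if l = Suc i then int (nat (?S i)) else 0)"
      by (rule sum.cong) (auto simp: path_flow_def)
    then show ?thesis using nonneg by (simp add: sum.delta)
  qed
  have inflow: "(\<Sum>k<Suc m. int (?f k (Suc m))) = (if Suc m \<le> n then ?S m else 0)" for m
  proof -
    have "(\<Sum>k<Suc m. int (?f k (Suc m)))
        = (\<Sum>k<Suc m. if k = m then int (if Suc m \<le> n then nat (?S m) else 0) else 0)"
      by (rule sum.cong) (auto simp: path_flow_def)
    then show ?thesis using nonneg by (simp add: sum.delta)
  qed
  have "(\<Sum>l\<in>{i<..n}. int (?f i l)) - (\<Sum>k<i. int (?f k i)) = M i" if "i \<le> n" for i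
  proof (cases i)
    case 0
    then show ?thesis using outflow[of 0] total by (cases n) auto
  next
    case (Suc m)
    then show ?thesis using outflow[of i] inflow[of m] total that by (auto simp: not_less)
  qed
  moreover have "\<not> (i < l \<and> l \<le> n) \<Longrightarrow> ?f i l = 0" for i l
    by (auto simp: path_flow_def)
  ultimately show ?thesis unfolding flows_def by auto
qed

lemma kostant_pos_iff:
  "kostant n M > 0 \<longleftrightarrow> (\<forall>k<n. (\<Sum>i\<le>k. M i) \<ge> 0) \<and> (\<Sum>i\<le>n. M i) = 0"
proof
  assume "kostant n M > 0"
  then obtain f where f: "f \<in> flows n M"
    unfolding kostant_def by (metis card_gt_0_iff ex_in_conv)
  have "(\<Sum>i\<le>k. M i) \<ge> 0" if "k \<le> n" for k
    using flows_outflow_of_initial_segment[OF f that] by (simp add: sum_nonneg)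
  moreover have "(\<Sum>i\<le>n. M i) = 0"
    using flows_outflow_of_initial_segment[OF f order.refl] by simp
  ultimately show "(\<forall>k<n. (\<Sum>i\<le>k. M i) \<ge> 0) \<and> (\<Sum>i\<le>n. M i) = 0"
    by simp
next
  assume "(\<forall>k<n. (\<Sum>i\<le>k. M i) \<ge> 0) \<and> (\<Sum>i\<le>n. M i) = 0"
  then have "flows n M \<noteq> {}" using path_flow_in_flows by blast
  then show "kostant n M > 0" unfolding kostant_def using finite_flows card_gt_0_iff by blast
qed

lemma sum_staircase_eq_choose_two: "(\<Sum>i<n. n - 1 - i) = n choose 2"
proof -
  have "(\<Sum>i<n. n - 1 - i) = (\<Sum>i<n. n - Suc i)" by simp
  also have "\<dots> = (\<Sum>i<n. i)" by (rule sum.nat_diff_reindex)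
  also have "\<dots> = n choose 2" by (simp add: choose_two Sum_Ico_nat lessThan_atLeast0)
  finally show ?thesis .
qed

lemma partial_sum_j_minus_delta:
  assumes "k < n"
  shows "(\<Sum>i\<le>k. j_minus_delta n j i) = int (\<Sum>i\<le>k. j i) - int (\<Sum>i\<le>k. n - 1 - i)"
proof -
  have "(\<Sum>i\<le>k. j_minus_delta n j i) = (\<Sum>i\<le>k. int (j i) - int (n - 1 - i))"
    by (rule sum.cong) (use assms in \<open>auto simp: j_minus_delta_def\<close>)
  then show ?thesis by (simp add: sum_subtractf)
qed

lemma total_sum_j_minus_delta:
  assumes "j \<in> weak_comps n"
  shows "(\<Sum>i\<le>n. j_minus_delta n j i) = 0"
proof -
  have "(\<Sum>i\<le>n. j_minus_delta n j i) = (\<Sum>i<n. int (j i) - int (n - 1 - i))"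
    by (simp add: lessThan_Suc_atMost[symmetric] j_minus_delta_def)
  also have "\<dots> = int (\<Sum>i<n. j i) - int (\<Sum>i<n. n - 1 - i)"
    by (simp add: sum_subtractf)
  also have "\<dots> = 0"
    using assms sum_staircase_eq_choose_two unfolding weak_comps_def by simp
  finally show ?thesis .
qed

lemma kostant_j_minus_delta_pos_iff:
  assumes "j \<in> weak_comps n"
  shows "kostant n (j_minus_delta n j) > 0 \<longleftrightarrow> (\<forall>k<n. (\<Sum>i\<le>k. j i) \<ge> (\<Sum>i\<le>k. n - 1 - i))"
proof -
  have "(\<Sum>i\<le>k. j_minus_delta n j i) \<ge> 0 \<longleftrightarrow> (\<Sum>i\<le>k. j i) \<ge> (\<Sum>i\<le>k. n - 1 - i)"
    if "k < n" for k
    using partial_sum_j_minus_delta[OF that, of j] by linarith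
  then show ?thesis
    by (simp add: kostant_pos_iff total_sum_j_minus_delta[OF assms])
qed

theorem proposition6p4:
  fixes n :: nat and N :: "nat \<Rightarrow> nat" and j :: "nat \<Rightarrow> nat"
  assumes "j \<in> weak_comps n"
  shows "j \<in> Splus n N \<longleftrightarrow>
    ((\<forall>i<n. j i \<le> N i + n - i - 1) \<and>
     (\<forall>k<n. (\<Sum>i\<le>k. j i) \<ge> (\<Sum>i\<le>k. n - 1 - i)))"
proof -
  have binomials_pos: "(\<Prod>i<n. (N i + n - 1 - i) choose (j i)) > 0 \<longleftrightarrow> (\<forall>i<n. j i \<le> N i + n - i - 1)"
    by auto
  have "j \<in> Splus n N \<longleftrightarrow>
      (\<Prod>i<n. (N i + n - 1 - i) choose (j i)) > 0 \<and> kostant n (j_minus_delta n j) > 0"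
    using assms unfolding Splus_def by simp
  also have "\<dots> \<longleftrightarrow> (\<forall>i<n. j i \<le> N i + n - i - 1) \<and>
      (\<forall>k<n. (\<Sum>i\<le>k. j i) \<ge> (\<Sum>i\<le>k. n - 1 - i))"
    by (simp only: binomials_pos kostant_j_minus_delta_pos_iff[OF assms])
  finally show ?thesis .
qed

end
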